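(* Let $\Omega=\{(x-a_1)^{r_1},\dots,(x-a_n)^{r_n}\}$ and $\Psi=\{(x-b_1)^{s_1},\dots,(x-b_m)^{s_m}\}$ be P-independent subsets of $\mathbb{F}[x;\sigma,\delta]$ of sizes $n,m\in\mathbb{Z}_+$ respectively, where $a_i,b_j\in\mathbb{F}$ and $r_i,s_j\in\mathbb{Z}_+$. If no element of $\{a_1,\dots,a_n\}$ is $(\sigma,\delta)$-conjugate to an element of $\{b_1,\dots,b_m\}$, then $\Omega\cup\Psi$ has size $n+m$ and is P-independent.
   Context: Let $\mathbb{F}$ be a division ring, $\sigma$ a ring endomorphism of $\mathbb{F}$ and $\delta$ a $\sigma$-derivation; $\mathbb{F}[x;\sigma,\delta]$ is the skew polynomial ring with $xa=\sigma(a)x+\delta(a)$. Elements $a,b\in\mathbb{F}$ are $(\sigma,\delta)$-conjugate if $b=a^\beta:=\sigma(\beta)a\beta^{-1}+\delta(\beta)\beta^{-1}$ for some $\beta\in\mathbb{F}^*$. For a set $\Omega$ of skew polynomials, $I(\Omega)$ is the left ideal of skew polynomials right-divisible by every element of $\Omega$ and $F_\Omega$ its monic generator of minimal degree (or $0$). $\Omega$ is P-independent if it is finite, $I(\Omega)\ne\{0\}$ and $\deg F_\Omega=\sum_{P\in\Omega}\deg P$. *)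

theory Defs
  imports "HOL-Computational_Algebra.Polynomial"
begin

text \<open>Skew polynomials F[x; sigma, delta] over a division ring are represented by the
 type 'a poly (coefficient sequences, written with coefficients on the left:
 sum of c_k x^k); only the additive structure of 'a poly is used, the
 multiplication is the skew multiplication defined below, determined by
 x a = sigma(a) x + delta(a).\<close>

definition ring_endo :: "('a::division_ring \<Rightarrow> 'a) \<Rightarrow> bool" where
  "ring_endo \<sigma> \<longleftrightarrow> (\<forall>a b. \<sigma> (a + b) = \<sigma> a + \<sigma> b) \<and> (\<forall>a b. \<sigma> (a * b) = \<sigma> a * \<sigma> b) \<and> \<sigma> 1 = 1"

definition sigma_derivation :: "('a::division_ring \<Rightarrow> 'a) \<Rightarrow> ('a \<Rightarrow> 'a) \<Rightarrow> bool" where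
  "sigma_derivation \<sigma> \<delta> \<longleftrightarrow> (\<forall>a b. \<delta> (a + b) = \<delta> a + \<delta> b) \<and>
      (\<forall>a b. \<delta> (a * b) = \<sigma> a * \<delta> b + \<delta> a * b)"

text \<open>left multiplication by x: x * (sum c_k x^k) = sum (sigma(c_k) x^(k+1) + delta(c_k) x^k)\<close>
definition skew_x :: "('a::division_ring \<Rightarrow> 'a) \<Rightarrow> ('a \<Rightarrow> 'a) \<Rightarrow> 'a poly \<Rightarrow> 'a poly" where
  "skew_x \<sigma> \<delta> p = pCons 0 (map_poly \<sigma> p) + map_poly \<delta> p"

definition lmult :: "'a::division_ring \<Rightarrow> 'a poly \<Rightarrow> 'a poly" where
  "lmult a p = map_poly (\<lambda>c. a * c) p"

text \<open>right multiplication by x^j\<close>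
definition shiftr :: "nat \<Rightarrow> 'a::division_ring poly \<Rightarrow> 'a poly" where
  "shiftr j p = (pCons 0 ^^ j) p"

text \<open>skew product: (c_i x^i)(d_j x^j) = c_i (x^i d_j) x^j\<close>
definition skew_mult :: "('a::division_ring \<Rightarrow> 'a) \<Rightarrow> ('a \<Rightarrow> 'a) \<Rightarrow> 'a poly \<Rightarrow> 'a poly \<Rightarrow> 'a poly" where
  "skew_mult \<sigma> \<delta> p q = (\<Sum>i\<le>degree p. \<Sum>j\<le>degree q.
      shiftr j (lmult (coeff p i) ((skew_x \<sigma> \<delta> ^^ i) [:coeff q j:])))"

fun skew_pow :: "('a::division_ring \<Rightarrow> 'a) \<Rightarrow> ('a \<Rightarrow> 'a) \<Rightarrow> 'a poly \<Rightarrow> nat \<Rightarrow> 'a poly" where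
  "skew_pow \<sigma> \<delta> p 0 = [:1:]"
| "skew_pow \<sigma> \<delta> p (Suc k) = skew_mult \<sigma> \<delta> (skew_pow \<sigma> \<delta> p k) p"

definition sd_conj :: "('a::division_ring \<Rightarrow> 'a) \<Rightarrow> ('a \<Rightarrow> 'a) \<Rightarrow> 'a \<Rightarrow> 'a \<Rightarrow> 'a" where
  "sd_conj \<sigma> \<delta> a \<beta> = \<sigma> \<beta> * a * inverse \<beta> + \<delta> \<beta> * inverse \<beta>"

definition sd_conjugate :: "('a::division_ring \<Rightarrow> 'a) \<Rightarrow> ('a \<Rightarrow> 'a) \<Rightarrow> 'a \<Rightarrow> 'a \<Rightarrow> bool" where
  "sd_conjugate \<sigma> \<delta> a b \<longleftrightarrow> (\<exists>\<beta>. \<beta> \<noteq> 0 \<and> b = sd_conj \<sigma> \<delta> a \<beta>)"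

definition right_dvd :: "('a::division_ring \<Rightarrow> 'a) \<Rightarrow> ('a \<Rightarrow> 'a) \<Rightarrow> 'a poly \<Rightarrow> 'a poly \<Rightarrow> bool" where
  "right_dvd \<sigma> \<delta> P F \<longleftrightarrow> (\<exists>Q. F = skew_mult \<sigma> \<delta> Q P)"

definition ideal_of :: "('a::division_ring \<Rightarrow> 'a) \<Rightarrow> ('a \<Rightarrow> 'a) \<Rightarrow> 'a poly set \<Rightarrow> 'a poly set" where
  "ideal_of \<sigma> \<delta> \<Omega> = {F. \<forall>P\<in>\<Omega>. right_dvd \<sigma> \<delta> P F}"

definition min_poly :: "('a::division_ring \<Rightarrow> 'a) \<Rightarrow> ('a \<Rightarrow> 'a) \<Rightarrow> 'a poly set \<Rightarrow> 'a poly" where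
  "min_poly \<sigma> \<delta> \<Omega> = (if ideal_of \<sigma> \<delta> \<Omega> = {0} then 0 else
     (SOME F. F \<in> ideal_of \<sigma> \<delta> \<Omega> \<and> lead_coeff F = 1 \<and>
        (\<forall>G\<in>ideal_of \<sigma> \<delta> \<Omega>. G \<noteq> 0 \<longrightarrow> degree F \<le> degree G)))"

definition P_independent :: "('a::division_ring \<Rightarrow> 'a) \<Rightarrow> ('a \<Rightarrow> 'a) \<Rightarrow> 'a poly set \<Rightarrow> bool" where
  "P_independent \<sigma> \<delta> \<Omega> \<longleftrightarrow> finite \<Omega> \<and> ideal_of \<sigma> \<delta> \<Omega> \<noteq> {0} \<and>
     degree (min_poly \<sigma> \<delta> \<Omega>) = (\<Sum>P\<in>\<Omega>. degree P)"

end

theory Submission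
  imports Defs
begin

text \<open>Let \<open>A\<close> and \<open>B\<close> be the unions of the \<open>(\<sigma>,\<delta>)\<close>-conjugacy classes of the \<open>a\<^sub>i\<close> and of
  the \<open>b\<^sub>j\<close>; they are disjoint and closed under conjugation. By the product formula for the
  Lam-Leroy evaluation, a product of linear factors \<open>(x - c\<^sub>1)\<cdots>(x - c\<^sub>k)\<close> with all
  \<open>c\<^sub>i\<close> in a conjugation-closed set \<open>S\<close> only has roots in \<open>S\<close>, and a linear factor \<open>x - d\<close>
  can be commuted to its right end via \<open>(x - d') (x - c) = (x - c') (x - d)\<close> with \<open>c' \<sim> c\<close>,
  \<open>d' \<sim> d\<close>. Hence \<open>I(\<Omega>)\<close> is generated by a product \<open>E\<^sub>A\<close> of \<open>\<Sum> r\<^sub>i\<close> linear factors from \<open>A\<close>,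
  and likewise \<open>I(\<Psi>) = F[x] E\<^sub>B\<close>. Swapping the factors of \<open>E\<^sub>B\<close> one by one across \<open>E\<^sub>A\<close>
  yields a common left multiple of degree at most \<open>\<Sum> r\<^sub>i + \<Sum> s\<^sub>j\<close>; conversely, if
  \<open>Q E\<^sub>A \<in> F[x] E\<^sub>B\<close> then, since \<open>A \<inter> B = {}\<close>, the factors of \<open>E\<^sub>B\<close> can be pushed through
  \<open>E\<^sub>A\<close> into \<open>Q\<close>, so every nonzero element of \<open>I(\<Omega> \<union> \<Psi>)\<close> has at least that degree.\<close>

lemma additive_sum:
  fixes f :: "'b::comm_monoid_add \<Rightarrow> 'c::ab_group_add"
  assumes add: "\<And>x y. f (x + y) = f x + f y"
  shows "f (sum g A) = (\<Sum>a\<in>A. f (g a))"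
proof -
  have "f 0 = 0" using add[of 0 0] by simp
  then show ?thesis using sum_comp_morphism[of f g A] add by (simp add: comp_def)
qed

lemma coeff_lmult: "coeff (lmult c p) k = c * coeff p k"
  by (simp add: lmult_def coeff_map_poly)

lemma degree_lmult_le: "degree (lmult c p) \<le> degree p"
  unfolding lmult_def by (rule map_poly_degree_leq)

locale skew_poly_ring =
  fixes \<sigma> \<delta> :: "'a::division_ring \<Rightarrow> 'a"
  assumes endo: "ring_endo \<sigma>" and der: "sigma_derivation \<sigma> \<delta>"
begin

lemma sigma_add: "\<sigma> (a + b) = \<sigma> a + \<sigma> b"
  using endo by (simp add: ring_endo_def)
lemma sigma_mult: "\<sigma> (a * b) = \<sigma> a * \<sigma> b"
  using endo by (simp add: ring_endo_def)
lemma sigma_1 [simp]: "\<sigma> 1 = 1"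
  using endo by (simp add: ring_endo_def)
lemma delta_add: "\<delta> (a + b) = \<delta> a + \<delta> b"
  using der by (simp add: sigma_derivation_def)
lemma delta_mult: "\<delta> (a * b) = \<sigma> a * \<delta> b + \<delta> a * b"
  using der by (simp add: sigma_derivation_def)
lemma sigma_0 [simp]: "\<sigma> 0 = 0"
  using sigma_add[of 0 0] by simp
lemma delta_0 [simp]: "\<delta> 0 = 0"
  using delta_add[of 0 0] by simp
lemma delta_1 [simp]: "\<delta> 1 = 0"
proof -
  have "\<delta> 1 = \<delta> 1 + \<delta> 1"
    using delta_mult[of 1 1] by (simp only: sigma_1 mult_1_left mult_1_right)
  then show ?thesis by (simp only: add_cancel_right_right)
qed
lemma sigma_minus: "\<sigma> (- a) = - \<sigma> a"
  by (rule minus_unique[symmetric]) (simp add: sigma_add[symmetric])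
lemma delta_minus: "\<delta> (- a) = - \<delta> a"
  by (rule minus_unique[symmetric]) (simp add: delta_add[symmetric])
lemma sigma_diff: "\<sigma> (a - b) = \<sigma> a - \<sigma> b"
  using sigma_add[of a "- b"] by (simp add: sigma_minus)
lemma delta_diff: "\<delta> (a - b) = \<delta> a - \<delta> b"
  using delta_add[of a "- b"] by (simp add: delta_minus)

lemma coeff_skew_x:
  "coeff (skew_x \<sigma> \<delta> p) k = (case k of 0 \<Rightarrow> 0 | Suc k' \<Rightarrow> \<sigma> (coeff p k')) + \<delta> (coeff p k)"
  by (simp add: skew_x_def coeff_pCons coeff_map_poly split: nat.splits)

lemma funpow_sigma_1 [simp]: "(\<sigma> ^^ k) 1 = 1"
  by (induction k) auto

lemma funpow_sigma_eq_0_iff [simp]: "(\<sigma> ^^ k) a = 0 \<longleftrightarrow> a = 0"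
proof -
  have sigma_eq_0: "\<sigma> b = 0 \<Longrightarrow> b = 0" for b
    by (metis sigma_mult sigma_1 right_inverse mult_zero_left zero_neq_one)
  show ?thesis by (induction k) (auto dest: sigma_eq_0)
qed

end

text \<open>Left \<open>F[x;\<sigma>,\<delta>]\<close>-modules, given by the action \<open>T\<close> of \<open>x\<close>, which must satisfy
  \<open>T (u m) = \<sigma>(u) T m + \<delta>(u) m\<close>. Associativity of the skew product and the product formula
  for evaluation are both instances of \<open>skew_act_skew_mult\<close>.\<close>

definition skew_act :: "('a::zero \<Rightarrow> 'm \<Rightarrow> 'm) \<Rightarrow> ('m \<Rightarrow> 'm) \<Rightarrow> 'a poly \<Rightarrow> 'm \<Rightarrow> 'm::comm_monoid_add"
  where "skew_act scale T p m = (\<Sum>i\<le>degree p. scale (coeff p i) ((T ^^ i) m))"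

locale skew_module = skew_poly_ring \<sigma> \<delta> for \<sigma> \<delta> :: "'a::division_ring \<Rightarrow> 'a" +
  fixes scale :: "'a \<Rightarrow> 'm::ab_group_add \<Rightarrow> 'm" and T :: "'m \<Rightarrow> 'm"
  assumes scale_add_right: "scale u (x + y) = scale u x + scale u y"
    and scale_add_left: "scale (u + v) x = scale u x + scale v x"
    and scale_scale: "scale u (scale v x) = scale (u * v) x"
    and scale_one: "scale 1 x = x"
    and T_add: "T (x + y) = T x + T y"
    and T_scale: "T (scale u x) = scale (\<sigma> u) (T x) + scale (\<delta> u) x"
begin

lemma scale_zero_left [simp]: "scale 0 x = 0"
  using scale_add_left[of 0 0 x] by simp
lemma funpow_T_add: "(T ^^ i) (x + y) = (T ^^ i) x + (T ^^ i) y"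
  by (induction i) (auto simp: T_add)

lemma skew_act_upto:
  "degree p \<le> N \<Longrightarrow> skew_act scale T p m = (\<Sum>i\<le>N. scale (coeff p i) ((T ^^ i) m))"
  unfolding skew_act_def by (rule sum.mono_neutral_left) (auto simp: coeff_eq_0)

lemma skew_act_add_poly: "skew_act scale T (p + q) m = skew_act scale T p m + skew_act scale T q m"
proof -
  let ?N = "max (degree p) (degree q)"
  have "degree (p + q) \<le> ?N" by (rule degree_add_le) auto
  then show ?thesis
    by (simp add: skew_act_upto[of _ ?N] sum.distrib[symmetric] scale_add_left)
qed

lemma skew_act_zero_poly [simp]: "skew_act scale T 0 m = 0"
  by (simp add: skew_act_def)

lemma skew_act_diff_poly: "skew_act scale T (p - q) m = skew_act scale T p m - skew_act scale T q m"
  using skew_act_add_poly[of "p - q" q m] by (simp add: eq_diff_eq)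

lemma skew_act_sum_poly: "skew_act scale T (sum f A) m = (\<Sum>a\<in>A. skew_act scale T (f a) m)"
  by (rule additive_sum) (rule skew_act_add_poly)

lemma skew_act_add: "skew_act scale T p (x + y) = skew_act scale T p x + skew_act scale T p y"
  by (simp add: skew_act_def funpow_T_add scale_add_right sum.distrib)

lemma skew_act_zero [simp]: "skew_act scale T p 0 = 0"
  using skew_act_add[of p 0 0] by simp

lemma skew_act_const [simp]: "skew_act scale T [:c:] m = scale c m"
  by (simp add: skew_act_def)

lemma skew_act_pCons_0: "skew_act scale T (pCons 0 p) m = skew_act scale T p (T m)"
proof -
  have "skew_act scale T (pCons 0 p) m =
      (\<Sum>i\<le>Suc (degree p). scale (coeff (pCons 0 p) i) ((T ^^ i) m))"
    by (rule skew_act_upto) (simp add: degree_pCons_le)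
  also have "\<dots> = (\<Sum>i\<le>degree p. scale (coeff p i) ((T ^^ i) (T m)))"
    by (simp only: sum.atMost_Suc_shift coeff_pCons_0 coeff_pCons_Suc scale_zero_left
        funpow_Suc_right comp_def add_0_left)
  finally show ?thesis by (simp add: skew_act_def)
qed

lemma skew_act_shiftr: "skew_act scale T (shiftr j p) m = skew_act scale T p ((T ^^ j) m)"
proof (induction j arbitrary: m)
  case (Suc j)
  have "shiftr (Suc j) p = pCons 0 (shiftr j p)" by (simp add: shiftr_def)
  then show ?case by (simp add: skew_act_pCons_0 Suc funpow_swap1)
qed (simp add: shiftr_def)

lemma skew_act_lmult: "skew_act scale T (lmult c p) m = scale c (skew_act scale T p m)"
proof -
  have "skew_act scale T (lmult c p) m = (\<Sum>i\<le>degree p. scale c (scale (coeff p i) ((T ^^ i) m)))"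
    by (simp add: skew_act_upto[OF degree_lmult_le] coeff_lmult scale_scale)
  also have "\<dots> = scale c (skew_act scale T p m)"
    unfolding skew_act_def by (rule additive_sum[symmetric]) (rule scale_add_right)
  finally show ?thesis .
qed

lemma skew_act_skew_x: "skew_act scale T (skew_x \<sigma> \<delta> p) m = T (skew_act scale T p m)"
proof -
  have "skew_act scale T (skew_x \<sigma> \<delta> p) m =
      skew_act scale T (map_poly \<sigma> p) (T m) + skew_act scale T (map_poly \<delta> p) m"
    by (simp add: skew_x_def skew_act_add_poly skew_act_pCons_0)
  also have "\<dots> = (\<Sum>i\<le>degree p. scale (\<sigma> (coeff p i)) ((T ^^ i) (T m))) +
      (\<Sum>i\<le>degree p. scale (\<delta> (coeff p i)) ((T ^^ i) m))"
    by (simp add: skew_act_upto[OF map_poly_degree_leq] coeff_map_poly)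
  also have "\<dots> = (\<Sum>i\<le>degree p. T (scale (coeff p i) ((T ^^ i) m)))"
    by (simp add: T_scale sum.distrib funpow_swap1)
  also have "\<dots> = T (skew_act scale T p m)"
    unfolding skew_act_def by (rule additive_sum[symmetric]) (rule T_add)
  finally show ?thesis .
qed

lemma skew_act_skew_mult:
  "skew_act scale T (skew_mult \<sigma> \<delta> p q) m = skew_act scale T p (skew_act scale T q m)"
proof -
  have act_x_pow: "skew_act scale T ((skew_x \<sigma> \<delta> ^^ i) p) m = (T ^^ i) (skew_act scale T p m)"
    for i p m by (induction i) (auto simp: skew_act_skew_x)
  have "skew_act scale T (skew_mult \<sigma> \<delta> p q) m =
      (\<Sum>i\<le>degree p. \<Sum>j\<le>degree q. scale (coeff p i) ((T ^^ i) (scale (coeff q j) ((T ^^ j) m))))"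
    by (simp add: skew_mult_def skew_act_sum_poly skew_act_shiftr skew_act_lmult act_x_pow)
  also have "\<dots> = (\<Sum>i\<le>degree p. scale (coeff p i) ((T ^^ i) (skew_act scale T q m)))"
    unfolding skew_act_def
    by (intro sum.cong refl additive_sum[symmetric]) (simp add: funpow_T_add scale_add_right)
  also have "\<dots> = skew_act scale T p (skew_act scale T q m)"
    by (simp add: skew_act_def)
  finally show ?thesis .
qed

end

text \<open>The module \<open>F[x]/F[x](x - c) \<cong> F\<close>: \<open>x\<close> acts on \<open>F\<close> by \<open>b \<mapsto> \<sigma>(b) c + \<delta>(b)\<close>.\<close>

definition pseudo_lin :: "('a::division_ring \<Rightarrow> 'a) \<Rightarrow> ('a \<Rightarrow> 'a) \<Rightarrow> 'a \<Rightarrow> 'a \<Rightarrow> 'a" where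
  "pseudo_lin \<sigma> \<delta> c b = \<sigma> b * c + \<delta> b"

context skew_poly_ring
begin

lemma skew_module_poly: "skew_module \<sigma> \<delta> lmult (skew_x \<sigma> \<delta>)"
proof (intro skew_module.intro skew_poly_ring_axioms skew_module_axioms.intro)
  fix u v :: 'a and x y :: "'a poly"
  show "lmult u (x + y) = lmult u x + lmult u y"
    by (rule poly_eqI) (simp add: coeff_lmult distrib_left)
  show "lmult (u + v) x = lmult u x + lmult v x"
    by (rule poly_eqI) (simp add: coeff_lmult distrib_right)
  show "lmult u (lmult v x) = lmult (u * v) x"
    by (rule poly_eqI) (simp add: coeff_lmult mult.assoc)
  show "lmult 1 x = x"
    by (rule poly_eqI) (simp add: coeff_lmult)
  show "skew_x \<sigma> \<delta> (x + y) = skew_x \<sigma> \<delta> x + skew_x \<sigma> \<delta> y"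
    by (rule poly_eqI) (simp add: coeff_skew_x sigma_add delta_add add_ac split: nat.splits)
  show "skew_x \<sigma> \<delta> (lmult u x) = lmult (\<sigma> u) (skew_x \<sigma> \<delta> x) + lmult (\<delta> u) x"
    by (rule poly_eqI)
      (simp add: coeff_skew_x coeff_lmult sigma_mult delta_mult distrib_left add_ac split: nat.splits)
qed

lemma skew_module_pseudo_lin: "skew_module \<sigma> \<delta> (*) (pseudo_lin \<sigma> \<delta> c)"
proof (intro skew_module.intro skew_poly_ring_axioms skew_module_axioms.intro)
  fix u v x y :: 'a
  show "u * (x + y) = u * x + u * y" "(u + v) * x = u * x + v * x" "u * (v * x) = (u * v) * x"
      "1 * x = x"
    by (simp_all add: distrib_left distrib_right mult.assoc)
  show "pseudo_lin \<sigma> \<delta> c (x + y) = pseudo_lin \<sigma> \<delta> c x + pseudo_lin \<sigma> \<delta> c y"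
    by (simp add: pseudo_lin_def sigma_add delta_add distrib_right add_ac)
  show "pseudo_lin \<sigma> \<delta> c (u * x) = \<sigma> u * pseudo_lin \<sigma> \<delta> c x + \<delta> u * x"
    by (simp add: pseudo_lin_def sigma_mult delta_mult distrib_left add_ac mult.assoc)
qed

end

sublocale skew_poly_ring \<subseteq> poly_module: skew_module \<sigma> \<delta> lmult "skew_x \<sigma> \<delta>"
  by (rule skew_module_poly)

context skew_poly_ring
begin

abbreviation skew_times (infixl "\<odot>" 70) where "p \<odot> q \<equiv> skew_mult \<sigma> \<delta> p q"

lemma skew_act_one: "skew_act lmult (skew_x \<sigma> \<delta>) p [:1:] = p"
proof -
  have "skew_x \<sigma> \<delta> (monom 1 i) = monom 1 (Suc i)" for i
    by (rule poly_eqI) (simp add: coeff_skew_x split: nat.splits)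
  then have "(skew_x \<sigma> \<delta> ^^ i) [:1:] = monom 1 i" for i
    by (induction i) (simp_all add: monom_0)
  then have "skew_act lmult (skew_x \<sigma> \<delta>) p [:1:] = (\<Sum>i\<le>degree p. monom (coeff p i) i)"
    unfolding skew_act_def by (intro sum.cong refl poly_eqI) (simp add: coeff_lmult)
  also have "\<dots> = p" by (rule poly_as_sum_of_monoms)
  finally show ?thesis .
qed

lemma skew_mult_eq_act: "p \<odot> q = skew_act lmult (skew_x \<sigma> \<delta>) p q"
  using poly_module.skew_act_skew_mult[of p q "[:1:]"] by (simp add: skew_act_one)

lemma skew_mult_assoc: "(p \<odot> q) \<odot> r = p \<odot> (q \<odot> r)"
  using poly_module.skew_act_skew_mult[of p q r] by (simp only: skew_mult_eq_act)

lemma skew_mult_add_left: "(p + q) \<odot> r = p \<odot> r + q \<odot> r"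
  by (simp add: skew_mult_eq_act poly_module.skew_act_add_poly)
lemma skew_mult_diff_left: "(p - q) \<odot> r = p \<odot> r - q \<odot> r"
  by (simp add: skew_mult_eq_act poly_module.skew_act_diff_poly)
lemma skew_mult_zero_left [simp]: "0 \<odot> q = 0"
  by (simp add: skew_mult_eq_act)
lemma skew_mult_one_left [simp]: "[:1:] \<odot> q = q"
  by (simp add: skew_mult_eq_act poly_module.scale_one)
lemma skew_mult_one_right [simp]: "q \<odot> [:1:] = q"
  by (simp add: skew_mult_eq_act skew_act_one)

lemma degree_funpow_skew_x:
  "degree ((skew_x \<sigma> \<delta> ^^ i) p) \<le> degree p + i \<and>
   coeff ((skew_x \<sigma> \<delta> ^^ i) p) (degree p + i) = (\<sigma> ^^ i) (lead_coeff p)"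
proof (induction i)
  case (Suc i)
  let ?p = "(skew_x \<sigma> \<delta> ^^ i) p"
  have "degree (skew_x \<sigma> \<delta> ?p) \<le> Suc (degree ?p)"
    by (rule degree_le) (auto simp: coeff_skew_x coeff_eq_0 split: nat.splits)
  moreover have "coeff (skew_x \<sigma> \<delta> ?p) (Suc (degree p + i)) = \<sigma> (coeff ?p (degree p + i))"
    using Suc by (simp add: coeff_skew_x coeff_eq_0)
  ultimately show ?case using Suc by simp
qed simp

lemma degree_skew_mult:
  assumes "p \<noteq> 0" and "q \<noteq> 0"
  shows "degree (p \<odot> q) = degree p + degree q"
    and "lead_coeff (p \<odot> q) = lead_coeff p * (\<sigma> ^^ degree p) (lead_coeff q)"
proof -
  let ?f = "\<lambda>i. lmult (coeff p i) ((skew_x \<sigma> \<delta> ^^ i) q)"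
  let ?N = "degree p + degree q"
  have pq: "p \<odot> q = (\<Sum>i\<le>degree p. ?f i)"
    by (simp add: skew_mult_eq_act skew_act_def)
  have "degree (?f i) \<le> ?N" if "i \<le> degree p" for i
    using that conjunct1[OF degree_funpow_skew_x[of i q]]
    by (intro order_trans[OF degree_lmult_le]) simp
  then have le: "degree (p \<odot> q) \<le> ?N"
    unfolding pq by (intro degree_sum_le) auto
  have "coeff (?f i) ?N = 0" if "i < degree p" for i
    using that degree_funpow_skew_x[of i q] by (simp add: coeff_lmult coeff_eq_0)
  then have "coeff (p \<odot> q) ?N = (\<Sum>i\<in>{degree p}. coeff (?f i) ?N)"
    unfolding pq coeff_sum by (intro sum.mono_neutral_right) auto
  also have "\<dots> = lead_coeff p * (\<sigma> ^^ degree p) (lead_coeff q)"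
    using degree_funpow_skew_x[of "degree p" q] by (simp add: coeff_lmult add.commute)
  finally have top: "coeff (p \<odot> q) ?N = lead_coeff p * (\<sigma> ^^ degree p) (lead_coeff q)" .
  moreover have "lead_coeff p * (\<sigma> ^^ degree p) (lead_coeff q) \<noteq> 0"
    using assms by simp
  ultimately have "?N \<le> degree (p \<odot> q)" by (intro le_degree) simp
  with le show "degree (p \<odot> q) = ?N" by simp
  with top show "lead_coeff (p \<odot> q) = lead_coeff p * (\<sigma> ^^ degree p) (lead_coeff q)" by simp
qed

lemma skew_mult_zero_right [simp]: "p \<odot> 0 = 0"
  by (simp add: skew_mult_eq_act)

lemma skew_mult_eq_0_iff [simp]: "p \<odot> q = 0 \<longleftrightarrow> p = 0 \<or> q = 0"
  by (metis degree_skew_mult(2) funpow_sigma_eq_0_iff leading_coeff_0_iff mult_eq_0_iff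
      skew_mult_zero_left skew_mult_zero_right)

lemma skew_mult_right_cancel: "p \<odot> r = q \<odot> r \<Longrightarrow> r \<noteq> 0 \<Longrightarrow> p = q"
  using skew_mult_diff_left[of p q r] by auto

lemma monic_skew_mult:
  "lead_coeff p = 1 \<Longrightarrow> lead_coeff q = 1 \<Longrightarrow>
   lead_coeff (p \<odot> q) = 1 \<and> degree (p \<odot> q) = degree p + degree q"
  using degree_skew_mult[of p q] by (cases "p = 0"; cases "q = 0") auto

lemma skew_div_monic:
  assumes G: "lead_coeff G = 1"
  shows "\<exists>Q R. F = Q \<odot> G + R \<and> (R = 0 \<or> degree R < degree G)"
proof (induction "degree F" arbitrary: F rule: less_induct)
  case less
  show ?case
  proof (cases "F = 0 \<or> degree F < degree G")
    case True
    then show ?thesis by (intro exI[of _ 0] exI[of _ F]) auto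
  next
    case False
    define M where "M = monom (lead_coeff F) (degree F - degree G)"
    have "M \<noteq> 0" "G \<noteq> 0" using False G by (auto simp: M_def)
    then have MG: "degree (M \<odot> G) = degree F" "lead_coeff (M \<odot> G) = lead_coeff F"
      using degree_skew_mult[of M G] False G by (simp_all add: M_def degree_monom_eq)
    define F' where "F' = F - M \<odot> G"
    have "degree F' < degree F \<or> F' = 0"
    proof (rule disjCI)
      assume "F' \<noteq> 0"
      moreover have "degree F' \<le> degree F"
        unfolding F'_def using MG by (intro degree_diff_le) auto
      moreover have "coeff F' (degree F) = 0"
        unfolding F'_def using MG by simp
      ultimately show "degree F' < degree F"
        by (metis le_neq_implies_less leading_coeff_0_iff)
    qed
    then obtain Q R where "F' = Q \<odot> G + R" "R = 0 \<or> degree R < degree G"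
    proof
      assume "degree F' < degree F"
      then show ?thesis using less that by blast
    next
      assume "F' = 0"
      then show ?thesis using that[of 0 0] by simp
    qed
    moreover from this(1) have "F = (Q + M) \<odot> G + R"
      by (simp add: F'_def skew_mult_add_left algebra_simps)
    ultimately show ?thesis by blast
  qed
qed

end

text \<open>Lam-Leroy evaluation: \<open>skew_eval \<sigma> \<delta> c F\<close> is the remainder of \<open>F\<close> under right division by
  \<open>x - c\<close>.\<close>

definition skew_eval :: "('a::division_ring \<Rightarrow> 'a) \<Rightarrow> ('a \<Rightarrow> 'a) \<Rightarrow> 'a \<Rightarrow> 'a poly \<Rightarrow> 'a" where
  "skew_eval \<sigma> \<delta> c F = skew_act (*) (pseudo_lin \<sigma> \<delta> c) F 1"

abbreviation x_minus :: "'a::ring_1 \<Rightarrow> 'a poly" where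
  "x_minus c \<equiv> [:- c, 1:]"

definition conj_closed :: "('a::division_ring \<Rightarrow> 'a) \<Rightarrow> ('a \<Rightarrow> 'a) \<Rightarrow> 'a set \<Rightarrow> bool" where
  "conj_closed \<sigma> \<delta> S \<longleftrightarrow> (\<forall>x\<in>S. \<forall>\<beta>. \<beta> \<noteq> 0 \<longrightarrow> sd_conj \<sigma> \<delta> x \<beta> \<in> S)"

definition conj_hull :: "('a::division_ring \<Rightarrow> 'a) \<Rightarrow> ('a \<Rightarrow> 'a) \<Rightarrow> 'a set \<Rightarrow> 'a set" where
  "conj_hull \<sigma> \<delta> X = {y. \<exists>x\<in>X. sd_conjugate \<sigma> \<delta> x y}"

lemma conj_closedD: "conj_closed \<sigma> \<delta> S \<Longrightarrow> x \<in> S \<Longrightarrow> \<beta> \<noteq> 0 \<Longrightarrow> sd_conj \<sigma> \<delta> x \<beta> \<in> S"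
  by (simp add: conj_closed_def)

lemma conj_closed_Un: "conj_closed \<sigma> \<delta> A \<Longrightarrow> conj_closed \<sigma> \<delta> B \<Longrightarrow> conj_closed \<sigma> \<delta> (A \<union> B)"
  by (auto simp: conj_closed_def)

context skew_poly_ring
begin

lemma skew_eval_skew_mult:
  "skew_eval \<sigma> \<delta> c (p \<odot> q) = skew_act (*) (pseudo_lin \<sigma> \<delta> c) p (skew_eval \<sigma> \<delta> c q)"
  unfolding skew_eval_def by (rule skew_module.skew_act_skew_mult[OF skew_module_pseudo_lin])

lemma skew_act_pseudo_lin_mult:
  assumes "\<beta> \<noteq> 0"
  shows "skew_act (*) (pseudo_lin \<sigma> \<delta> c) p (u * \<beta>) =
    skew_act (*) (pseudo_lin \<sigma> \<delta> (sd_conj \<sigma> \<delta> c \<beta>)) p u * \<beta>"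
proof -
  have step: "pseudo_lin \<sigma> \<delta> c (u * \<beta>) = pseudo_lin \<sigma> \<delta> (sd_conj \<sigma> \<delta> c \<beta>) u * \<beta>" for u
    using assms by (simp add: pseudo_lin_def sd_conj_def sigma_mult delta_mult
        distrib_left distrib_right mult.assoc add_ac)
  have "(pseudo_lin \<sigma> \<delta> c ^^ i) (u * \<beta>) = (pseudo_lin \<sigma> \<delta> (sd_conj \<sigma> \<delta> c \<beta>) ^^ i) u * \<beta>"
    for i u by (induction i) (simp_all add: step)
  then show ?thesis by (simp add: skew_act_def sum_distrib_right mult.assoc)
qed

lemma skew_eval_skew_mult_nonzero:
  "skew_eval \<sigma> \<delta> c q \<noteq> 0 \<Longrightarrow>
   skew_eval \<sigma> \<delta> c (p \<odot> q) = skew_eval \<sigma> \<delta> (sd_conj \<sigma> \<delta> c (skew_eval \<sigma> \<delta> c q)) p * skew_eval \<sigma> \<delta> c q"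
  using skew_eval_skew_mult[of c p q] skew_act_pseudo_lin_mult[of "skew_eval \<sigma> \<delta> c q" c p 1]
  by (simp add: skew_eval_def)

lemma skew_eval_skew_mult_zero: "skew_eval \<sigma> \<delta> c q = 0 \<Longrightarrow> skew_eval \<sigma> \<delta> c (p \<odot> q) = 0"
  by (simp add: skew_eval_skew_mult skew_module.skew_act_zero[OF skew_module_pseudo_lin])

lemma skew_eval_add: "skew_eval \<sigma> \<delta> c (p + q) = skew_eval \<sigma> \<delta> c p + skew_eval \<sigma> \<delta> c q"
  by (simp add: skew_eval_def skew_module.skew_act_add_poly[OF skew_module_pseudo_lin])

lemma skew_eval_const [simp]: "skew_eval \<sigma> \<delta> c [:u:] = u"
  by (simp add: skew_eval_def skew_module.skew_act_const[OF skew_module_pseudo_lin])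

lemma skew_eval_x_minus [simp]: "skew_eval \<sigma> \<delta> c (x_minus d) = c - d"
  by (simp add: skew_eval_def skew_act_def pseudo_lin_def atMost_Suc)

lemma skew_eval_eq_0_imp_right_factor:
  assumes "skew_eval \<sigma> \<delta> d F = 0"
  shows "\<exists>Q. F = Q \<odot> x_minus d"
proof -
  obtain Q R where QR: "F = Q \<odot> x_minus d + R" "R = 0 \<or> degree R < 1"
    using skew_div_monic[of "x_minus d" F] by auto
  then have "degree R = 0" by auto
  then obtain r where R: "R = [:r:]"
    using degree_0_id by metis
  with QR(1) have "skew_eval \<sigma> \<delta> d F = r"
    by (simp add: skew_eval_add skew_eval_skew_mult_zero)
  with assms QR(1) R show ?thesis by auto
qed

lemma sd_conj_1 [simp]: "sd_conj \<sigma> \<delta> c 1 = c"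
  by (simp add: sd_conj_def)

lemma sd_conj_sd_conj:
  assumes "\<beta> \<noteq> 0" "\<gamma> \<noteq> 0"
  shows "sd_conj \<sigma> \<delta> (sd_conj \<sigma> \<delta> c \<gamma>) \<beta> = sd_conj \<sigma> \<delta> c (\<beta> * \<gamma>)"
proof -
  have "\<gamma> * (inverse \<gamma> * x) = x" for x
    using assms by (simp add: mult.assoc[symmetric])
  then show ?thesis
    using assms by (simp add: sd_conj_def sigma_mult delta_mult nonzero_inverse_mult_distrib
        distrib_left distrib_right mult.assoc add_ac)
qed

lemma sd_conj_inverse: "\<beta> \<noteq> 0 \<Longrightarrow> sd_conj \<sigma> \<delta> (sd_conj \<sigma> \<delta> c \<beta>) (inverse \<beta>) = c"
  by (simp add: sd_conj_sd_conj)

lemma sd_conjugate_refl: "sd_conjugate \<sigma> \<delta> a a"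
  unfolding sd_conjugate_def by (intro exI[of _ 1]) simp

lemma sd_conjugate_sym: "sd_conjugate \<sigma> \<delta> a b \<Longrightarrow> sd_conjugate \<sigma> \<delta> b a"
  unfolding sd_conjugate_def by (metis sd_conj_inverse inverse_nonzero_iff_nonzero)

lemma sd_conjugate_trans:
  assumes "sd_conjugate \<sigma> \<delta> a b" "sd_conjugate \<sigma> \<delta> b c"
  shows "sd_conjugate \<sigma> \<delta> a c"
proof -
  obtain \<gamma> \<beta> where "\<gamma> \<noteq> 0" "b = sd_conj \<sigma> \<delta> a \<gamma>" "\<beta> \<noteq> 0" "c = sd_conj \<sigma> \<delta> b \<beta>"
    using assms by (auto simp: sd_conjugate_def)
  then have "\<beta> * \<gamma> \<noteq> 0" "c = sd_conj \<sigma> \<delta> a (\<beta> * \<gamma>)"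
    by (simp_all add: sd_conj_sd_conj)
  then show ?thesis unfolding sd_conjugate_def by blast
qed

lemma conj_closed_conj_hull: "conj_closed \<sigma> \<delta> (conj_hull \<sigma> \<delta> X)"
proof -
  have "sd_conjugate \<sigma> \<delta> y (sd_conj \<sigma> \<delta> y \<beta>)" if "\<beta> \<noteq> 0" for y \<beta>
    using that unfolding sd_conjugate_def by blast
  then show ?thesis
    unfolding conj_closed_def conj_hull_def by (blast intro: sd_conjugate_trans)
qed

lemma subset_conj_hull: "X \<subseteq> conj_hull \<sigma> \<delta> X"
  by (auto simp: conj_hull_def intro: sd_conjugate_refl)

lemma conj_hull_disjoint:
  assumes "\<forall>x\<in>X. \<forall>y\<in>Y. \<not> sd_conjugate \<sigma> \<delta> x y"
  shows "conj_hull \<sigma> \<delta> X \<inter> conj_hull \<sigma> \<delta> Y = {}"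
proof -
  have False if "x \<in> X" "y \<in> Y" "sd_conjugate \<sigma> \<delta> x z" "sd_conjugate \<sigma> \<delta> y z" for x y z
    using assms that sd_conjugate_trans[OF that(3) sd_conjugate_sym[OF that(4)]] by blast
  then show ?thesis
    unfolding conj_hull_def by blast
qed

text \<open>The two conjugates are chosen so that, by the product formula, both sides vanish at \<open>c\<close>
  and at \<open>d\<close>.\<close>

lemma x_minus_skew_mult_swap:
  assumes cd: "c \<noteq> d"
  shows "x_minus (sd_conj \<sigma> \<delta> d (d - c)) \<odot> x_minus c = x_minus (sd_conj \<sigma> \<delta> c (c - d)) \<odot> x_minus d"
proof -
  have mult: "x_minus u \<odot> x_minus c = [:u * c - \<delta> c, - u - \<sigma> c, 1:]" for u c
    by (rule poly_eqI) (simp add: skew_mult_eq_act skew_act_def atMost_Suc coeff_lmult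
        coeff_skew_x coeff_pCons sigma_minus delta_minus algebra_simps split: nat.splits)
  define e where "e = d - c"
  define u where "u = sd_conj \<sigma> \<delta> d (d - c)"
  define v where "v = sd_conj \<sigma> \<delta> c (c - d)"
  have e0: "e \<noteq> 0" using cd by (simp add: e_def)
  have "c - d = - e" by (simp add: e_def)
  then have v: "v = \<sigma> e * c * inverse e + \<delta> e * inverse e"
    by (simp add: v_def sd_conj_def sigma_minus delta_minus)
  have u: "u = \<sigma> e * d * inverse e + \<delta> e * inverse e"
    by (simp add: u_def sd_conj_def e_def)
  have "u - v = \<sigma> e * (d - c) * inverse e"
    by (simp add: u v algebra_simps)
  also have "\<dots> = \<sigma> e"
    using e0 by (simp add: e_def[symmetric] mult.assoc)
  finally have uv: "v = u - \<sigma> e"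
    by (simp add: algebra_simps)
  have "u * e = \<sigma> e * d + \<delta> e"
    using e0 by (simp add: u distrib_right mult.assoc)
  then have "u * c - v * d = - \<delta> e"
    by (simp add: uv e_def algebra_simps)
  then have "u * c - \<delta> c = v * d - \<delta> d"
    by (simp add: e_def delta_diff algebra_simps)
  moreover have "- u - \<sigma> c = - v - \<sigma> d"
    by (simp add: uv e_def sigma_diff algebra_simps)
  ultimately show ?thesis
    by (simp only: mult u_def[symmetric] v_def[symmetric])
qed

fun x_minus_prod :: "'a list \<Rightarrow> 'a poly" where
  "x_minus_prod [] = [:1:]"
| "x_minus_prod (c # cs) = x_minus c \<odot> x_minus_prod cs"

definition x_minus_prods :: "'a set \<Rightarrow> 'a poly set" where
  "x_minus_prods S = {x_minus_prod cs | cs. set cs \<subseteq> S}"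

lemma x_minus_prod_append: "x_minus_prod (cs @ ds) = x_minus_prod cs \<odot> x_minus_prod ds"
  by (induction cs) (simp_all add: skew_mult_assoc)

lemma x_minus_prod_snoc: "x_minus_prod (cs @ [c]) = x_minus_prod cs \<odot> x_minus c"
  by (simp add: x_minus_prod_append)

lemma monic_x_minus_prod: "lead_coeff (x_minus_prod cs) = 1 \<and> degree (x_minus_prod cs) = length cs"
proof (induction cs)
  case (Cons c cs)
  then show ?case
    using monic_skew_mult[of "x_minus c" "x_minus_prod cs"] by auto
qed simp

lemma degree_x_minus_prod [simp]: "degree (x_minus_prod cs) = length cs"
  using monic_x_minus_prod by blast

lemma x_minus_prod_nonzero [simp]: "x_minus_prod cs \<noteq> 0"
  using monic_x_minus_prod[of cs] by auto

lemma skew_pow_x_minus: "skew_pow \<sigma> \<delta> (x_minus a) r = x_minus_prod (replicate r a)"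
  by (induction r) (simp_all add: replicate_append_same[symmetric] x_minus_prod_snoc)

text \<open>The root is followed through the factors from the right by the product formula, and \<open>x - d\<close>
  is moved back to the right end with the swap rule.\<close>

lemma x_minus_prod_right_factor:
  assumes S: "conj_closed \<sigma> \<delta> S" and "set cs \<subseteq> S" "d \<in> S"
    and "skew_eval \<sigma> \<delta> d (x_minus_prod cs) = 0"
  shows "\<exists>ns. set ns \<subseteq> S \<and> x_minus_prod cs = x_minus_prod ns \<odot> x_minus d"
  using assms(2-4)
proof (induction cs arbitrary: d rule: rev_induct)
  case (snoc c cs)
  show ?case
  proof (cases "c = d")
    case True
    then show ?thesis using snoc.prems by (intro exI[of _ cs]) (simp add: x_minus_prod_snoc)
  next
    case False
    define e where "e = d - c"
    define d' where "d' = sd_conj \<sigma> \<delta> d e"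
    define c' where "c' = sd_conj \<sigma> \<delta> c (c - d)"
    have e0: "e \<noteq> 0" using False by (simp add: e_def)
    have "skew_eval \<sigma> \<delta> d (x_minus_prod (cs @ [c])) = skew_eval \<sigma> \<delta> d' (x_minus_prod cs) * e"
      using skew_eval_skew_mult_nonzero[of d "x_minus c" "x_minus_prod cs"] e0
      by (simp add: x_minus_prod_snoc d'_def e_def)
    with snoc.prems e0 have "skew_eval \<sigma> \<delta> d' (x_minus_prod cs) = 0" by simp
    moreover have "d' \<in> S" "c' \<in> S"
      using S snoc.prems e0 False by (simp_all add: d'_def c'_def conj_closedD)
    ultimately obtain ns where ns: "set ns \<subseteq> S" "x_minus_prod cs = x_minus_prod ns \<odot> x_minus d'"
      using snoc.IH[of d'] snoc.prems by auto
    have "x_minus d' \<odot> x_minus c = x_minus c' \<odot> x_minus d"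
      using x_minus_skew_mult_swap[of c d] False by (simp add: d'_def c'_def e_def)
    then have "x_minus_prod (cs @ [c]) = x_minus_prod (ns @ [c']) \<odot> x_minus d"
      by (simp add: x_minus_prod_snoc ns(2) skew_mult_assoc)
    then show ?thesis using ns(1) \<open>c' \<in> S\<close> by (intro exI[of _ "ns @ [c']"]) simp
  qed
qed simp

lemma root_x_minus_prod_in_conj_closed:
  assumes S: "conj_closed \<sigma> \<delta> S" and "set ds \<subseteq> S"
    and "skew_eval \<sigma> \<delta> c (x_minus_prod ds) = 0"
  shows "c \<in> S"
  using assms(2,3)
proof (induction ds arbitrary: c rule: rev_induct)
  case (snoc d ds)
  show ?case
  proof (cases "c = d")
    case False
    define e where "e = c - d"
    have e0: "e \<noteq> 0" using False by (simp add: e_def)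
    have "skew_eval \<sigma> \<delta> c (x_minus_prod (ds @ [d])) = skew_eval \<sigma> \<delta> (sd_conj \<sigma> \<delta> c e) (x_minus_prod ds) * e"
      using skew_eval_skew_mult_nonzero[of c "x_minus d" "x_minus_prod ds"] e0
      by (simp add: x_minus_prod_snoc e_def)
    with snoc e0 have "sd_conj \<sigma> \<delta> c e \<in> S" by simp
    then have "sd_conj \<sigma> \<delta> (sd_conj \<sigma> \<delta> c e) (inverse e) \<in> S"
      using S e0 by (simp add: conj_closedD)
    then show ?thesis using e0 by (simp add: sd_conj_inverse)
  qed (use snoc.prems in simp)
qed simp

lemma x_minus_prods_inter:
  assumes "conj_closed \<sigma> \<delta> B" "A \<inter> B = {}"
    and "P \<in> x_minus_prods A" "P \<in> x_minus_prods B"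
  shows "P = [:1:]"
proof -
  obtain cs ds where cs: "set cs \<subseteq> A" "P = x_minus_prod cs" and ds: "set ds \<subseteq> B" "P = x_minus_prod ds"
    using assms(3,4) by (auto simp: x_minus_prods_def)
  show ?thesis
  proof (cases cs rule: rev_cases)
    case (snoc cs' c)
    then have "skew_eval \<sigma> \<delta> c (x_minus_prod ds) = 0"
      using cs(2) ds(2) by (simp add: x_minus_prod_snoc skew_eval_skew_mult_zero)
    then have "c \<in> B" using root_x_minus_prod_in_conj_closed assms(1) ds(1) by blast
    with snoc cs(1) assms(2) show ?thesis by auto
  qed (use cs in simp)
qed

lemma x_minus_prod_common_left_multiple:
  assumes S: "conj_closed \<sigma> \<delta> S" and "set cs \<subseteq> S" "set ds \<subseteq> S"
  shows "\<exists>ts K. set ts \<subseteq> S \<and> length ts \<le> length ds \<and>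
    x_minus_prod ts \<odot> x_minus_prod cs = K \<odot> x_minus_prod ds"
  using assms(2,3)
proof (induction ds arbitrary: cs rule: rev_induct)
  case Nil
  then show ?case by (intro exI[of _ "[]"] exI[of _ "x_minus_prod cs"]) simp
next
  case (snoc d ds)
  have "\<exists>t. set t \<subseteq> S \<and> length t \<le> 1 \<and> skew_eval \<sigma> \<delta> d (x_minus_prod (t @ cs)) = 0"
  proof (cases "skew_eval \<sigma> \<delta> d (x_minus_prod cs) = 0")
    case True
    then show ?thesis by (intro exI[of _ "[]"]) simp
  next
    case False
    define d' where "d' = sd_conj \<sigma> \<delta> d (skew_eval \<sigma> \<delta> d (x_minus_prod cs))"
    have "d' \<in> S" using S snoc.prems False by (simp add: d'_def conj_closedD)
    moreover have "skew_eval \<sigma> \<delta> d (x_minus_prod ([d'] @ cs)) = 0"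
      using skew_eval_skew_mult_nonzero[OF False, of "x_minus d'"] by (simp add: d'_def)
    ultimately show ?thesis by (intro exI[of _ "[d']"]) simp
  qed
  then obtain t where t: "set t \<subseteq> S" "length t \<le> 1" "skew_eval \<sigma> \<delta> d (x_minus_prod (t @ cs)) = 0"
    by blast
  obtain ns where ns: "set ns \<subseteq> S" "x_minus_prod (t @ cs) = x_minus_prod ns \<odot> x_minus d"
    using x_minus_prod_right_factor[OF S _ _ t(3)] t(1) snoc.prems by auto
  obtain ts K where ts: "set ts \<subseteq> S" "length ts \<le> length ds"
    "x_minus_prod ts \<odot> x_minus_prod ns = K \<odot> x_minus_prod ds"
    using snoc.IH[OF ns(1)] snoc.prems by auto
  have "x_minus_prod (ts @ t) \<odot> x_minus_prod cs = x_minus_prod ts \<odot> x_minus_prod (t @ cs)"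
    by (simp add: x_minus_prod_append skew_mult_assoc)
  also have "\<dots> = K \<odot> x_minus_prod (ds @ [d])"
    by (simp add: ns(2) ts(3) x_minus_prod_snoc skew_mult_assoc[symmetric])
  finally show ?case
    using t ts by (intro exI[of _ "ts @ t"] exI[of _ K]) simp
qed

text \<open>Disjointness gives \<open>c \<noteq> d\<close> for the last factor \<open>x - d\<close> of the divisor, so \<open>P\<close> has the
  root \<open>d\<^bsup>d - c\<^esup>\<close>; splitting it off and swapping it past \<open>x - c\<close> reduces the divisor.\<close>

lemma right_dvd_x_minus_prod_cancel_x_minus:
  assumes A: "conj_closed \<sigma> \<delta> A" and B: "conj_closed \<sigma> \<delta> B" and AB: "A \<inter> B = {}"
    and "c \<in> A" "set ds \<subseteq> B" "right_dvd \<sigma> \<delta> (x_minus_prod ds) (P \<odot> x_minus c)"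
  shows "\<exists>ds'. set ds' \<subseteq> B \<and> length ds' = length ds \<and> right_dvd \<sigma> \<delta> (x_minus_prod ds') P"
  using assms(4-6)
proof (induction ds arbitrary: P c rule: rev_induct)
  case Nil
  then show ?case by (intro exI[of _ "[]"]) (auto simp: right_dvd_def intro: exI[of _ P])
next
  case (snoc d ds)
  obtain K where K: "P \<odot> x_minus c = K \<odot> x_minus_prod ds \<odot> x_minus d"
    using snoc.prems(3) by (auto simp: right_dvd_def x_minus_prod_snoc skew_mult_assoc)
  have cd: "c \<noteq> d" using AB snoc.prems by auto
  define d' where "d' = sd_conj \<sigma> \<delta> d (d - c)"
  define c' where "c' = sd_conj \<sigma> \<delta> c (c - d)"
  have "d' \<in> B" "c' \<in> A"
    using A B snoc.prems cd by (simp_all add: d'_def c'_def conj_closedD)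
  have "skew_eval \<sigma> \<delta> d (P \<odot> x_minus c) = skew_eval \<sigma> \<delta> d' P * (d - c)"
    using skew_eval_skew_mult_nonzero[of d "x_minus c" P] cd by (simp add: d'_def)
  moreover have "skew_eval \<sigma> \<delta> d (P \<odot> x_minus c) = 0"
    by (simp add: K skew_eval_skew_mult_zero)
  ultimately obtain P1 where P1: "P = P1 \<odot> x_minus d'"
    using cd skew_eval_eq_0_imp_right_factor[of d' P] by auto
  have "x_minus d' \<odot> x_minus c = x_minus c' \<odot> x_minus d"
    using x_minus_skew_mult_swap[OF cd] by (simp add: d'_def c'_def)
  then have "(P1 \<odot> x_minus c') \<odot> x_minus d = (K \<odot> x_minus_prod ds) \<odot> x_minus d"
    using K by (simp add: P1 skew_mult_assoc)
  then have "P1 \<odot> x_minus c' = K \<odot> x_minus_prod ds"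
    by (rule skew_mult_right_cancel) simp
  then have "right_dvd \<sigma> \<delta> (x_minus_prod ds) (P1 \<odot> x_minus c')"
    unfolding right_dvd_def by blast
  then obtain ds' K' where ds': "set ds' \<subseteq> B" "length ds' = length ds" "P1 = K' \<odot> x_minus_prod ds'"
    using snoc.IH[of c' P1] \<open>c' \<in> A\<close> snoc.prems by (auto simp: right_dvd_def)
  have "P = K' \<odot> x_minus_prod (ds' @ [d'])"
    by (simp add: P1 ds'(3) x_minus_prod_snoc skew_mult_assoc)
  then show ?case
    using ds' \<open>d' \<in> B\<close> by (intro exI[of _ "ds' @ [d']"]) (auto simp: right_dvd_def)
qed

lemma right_dvd_x_minus_prod_cancel:
  assumes A: "conj_closed \<sigma> \<delta> A" and B: "conj_closed \<sigma> \<delta> B" and AB: "A \<inter> B = {}"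
    and "set cs \<subseteq> A" "set ds \<subseteq> B" "right_dvd \<sigma> \<delta> (x_minus_prod ds) (P \<odot> x_minus_prod cs)"
  shows "\<exists>ds'. set ds' \<subseteq> B \<and> length ds' = length ds \<and> right_dvd \<sigma> \<delta> (x_minus_prod ds') P"
  using assms(4-6)
proof (induction cs arbitrary: ds rule: rev_induct)
  case (snoc c cs)
  then have "c \<in> A" by simp
  from snoc.prems(3) have "right_dvd \<sigma> \<delta> (x_minus_prod ds) ((P \<odot> x_minus_prod cs) \<odot> x_minus c)"
    by (simp add: x_minus_prod_snoc skew_mult_assoc)
  then obtain ds1 where "set ds1 \<subseteq> B" "length ds1 = length ds"
      "right_dvd \<sigma> \<delta> (x_minus_prod ds1) (P \<odot> x_minus_prod cs)"
    using right_dvd_x_minus_prod_cancel_x_minus[OF A B AB \<open>c \<in> A\<close> snoc.prems(2)] by blast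
  then show ?case using snoc.IH snoc.prems by fastforce
qed auto

lemma degree_common_left_multiple_ge:
  assumes A: "conj_closed \<sigma> \<delta> A" and B: "conj_closed \<sigma> \<delta> B" and AB: "A \<inter> B = {}"
    and "set es \<subseteq> A" "set fs \<subseteq> B"
    and G: "G = Q \<odot> x_minus_prod es" "G = Q' \<odot> x_minus_prod fs" "G \<noteq> 0"
  shows "length es + length fs \<le> degree G"
proof -
  have "right_dvd \<sigma> \<delta> (x_minus_prod fs) (Q \<odot> x_minus_prod es)"
    using G(1,2) unfolding right_dvd_def by metis
  from right_dvd_x_minus_prod_cancel[OF A B AB assms(4,5) this]
  obtain fs' K where "length fs' = length fs" "Q = K \<odot> x_minus_prod fs'"
    by (auto simp: right_dvd_def)
  moreover have "K \<noteq> 0" using G calculation by auto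
  ultimately show ?thesis
    using G(1) by (simp add: degree_skew_mult)
qed

lemma zero_in_ideal_of: "0 \<in> ideal_of \<sigma> \<delta> \<Omega>"
  by (auto simp: ideal_of_def right_dvd_def intro: exI[of _ 0])

lemma ideal_of_left_mult: "F \<in> ideal_of \<sigma> \<delta> \<Omega> \<Longrightarrow> K \<odot> F \<in> ideal_of \<sigma> \<delta> \<Omega>"
  by (simp add: ideal_of_def right_dvd_def) (metis skew_mult_assoc)

lemma ideal_of_diff: "F \<in> ideal_of \<sigma> \<delta> \<Omega> \<Longrightarrow> G \<in> ideal_of \<sigma> \<delta> \<Omega> \<Longrightarrow> F - G \<in> ideal_of \<sigma> \<delta> \<Omega>"
  by (auto simp: ideal_of_def right_dvd_def) (metis skew_mult_diff_left)

lemma ideal_of_Un: "ideal_of \<sigma> \<delta> (\<Omega> \<union> \<Psi>) = ideal_of \<sigma> \<delta> \<Omega> \<inter> ideal_of \<sigma> \<delta> \<Psi>"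
  by (auto simp: ideal_of_def)

lemma min_poly_spec:
  assumes "ideal_of \<sigma> \<delta> \<Omega> \<noteq> {0}"
  shows "min_poly \<sigma> \<delta> \<Omega> \<in> ideal_of \<sigma> \<delta> \<Omega>" "lead_coeff (min_poly \<sigma> \<delta> \<Omega>) = 1"
    and "\<And>G. G \<in> ideal_of \<sigma> \<delta> \<Omega> \<Longrightarrow> G \<noteq> 0 \<Longrightarrow> degree (min_poly \<sigma> \<delta> \<Omega>) \<le> degree G"
proof -
  let ?I = "ideal_of \<sigma> \<delta> \<Omega>"
  obtain G0 where "G0 \<in> ?I" "G0 \<noteq> 0"
    using assms zero_in_ideal_of by blast
  then obtain G where G: "G \<in> ?I" "G \<noteq> 0" and G_min: "\<And>H. H \<in> ?I \<Longrightarrow> H \<noteq> 0 \<Longrightarrow> degree G \<le> degree H"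
    using ex_has_least_nat[of "\<lambda>H. H \<in> ?I \<and> H \<noteq> 0" G0 degree] by blast
  define c where "c = inverse (lead_coeff G)"
  have "c \<noteq> 0" using G by (simp add: c_def)
  then have "degree ([:c:] \<odot> G) = degree G" "lead_coeff ([:c:] \<odot> G) = 1"
    using degree_skew_mult[of "[:c:]" G] G by (simp_all add: c_def)
  moreover have "[:c:] \<odot> G \<in> ?I" using G by (simp add: ideal_of_left_mult)
  ultimately have "\<exists>F. F \<in> ?I \<and> lead_coeff F = 1 \<and> (\<forall>H\<in>?I. H \<noteq> 0 \<longrightarrow> degree F \<le> degree H)"
    using G_min by metis
  then have "min_poly \<sigma> \<delta> \<Omega> \<in> ?I \<and> lead_coeff (min_poly \<sigma> \<delta> \<Omega>) = 1 \<and>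
      (\<forall>H\<in>?I. H \<noteq> 0 \<longrightarrow> degree (min_poly \<sigma> \<delta> \<Omega>) \<le> degree H)"
    unfolding min_poly_def using assms by (simp only: if_False) (rule someI_ex)
  then show "min_poly \<sigma> \<delta> \<Omega> \<in> ?I" "lead_coeff (min_poly \<sigma> \<delta> \<Omega>) = 1"
    and "\<And>G. G \<in> ?I \<Longrightarrow> G \<noteq> 0 \<Longrightarrow> degree (min_poly \<sigma> \<delta> \<Omega>) \<le> degree G"
    by blast+
qed

lemma P_independent_degree_le:
  "P_independent \<sigma> \<delta> \<Omega> \<Longrightarrow> G \<in> ideal_of \<sigma> \<delta> \<Omega> \<Longrightarrow> G \<noteq> 0 \<Longrightarrow> (\<Sum>P\<in>\<Omega>. degree P) \<le> degree G"
  using min_poly_spec(3)[of \<Omega> G] by (simp add: P_independent_def)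

lemma P_independentI:
  assumes "finite \<Omega>" "H \<in> ideal_of \<sigma> \<delta> \<Omega>" "H \<noteq> 0" "degree H \<le> (\<Sum>P\<in>\<Omega>. degree P)"
    and "\<And>G. G \<in> ideal_of \<sigma> \<delta> \<Omega> \<Longrightarrow> G \<noteq> 0 \<Longrightarrow> (\<Sum>P\<in>\<Omega>. degree P) \<le> degree G"
  shows "P_independent \<sigma> \<delta> \<Omega>"
proof -
  have ne: "ideal_of \<sigma> \<delta> \<Omega> \<noteq> {0}" using assms(2,3) by blast
  then have "min_poly \<sigma> \<delta> \<Omega> \<noteq> 0" using min_poly_spec(2) by force
  with ne have "degree (min_poly \<sigma> \<delta> \<Omega>) = (\<Sum>P\<in>\<Omega>. degree P)"
    using min_poly_spec[OF ne] assms(2-5) by (meson le_antisym order_trans)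
  with assms(1) ne show ?thesis by (simp add: P_independent_def)
qed

lemma ideal_of_contains_x_minus_prod:
  assumes S: "conj_closed \<sigma> \<delta> S" and "finite \<Omega>" "\<Omega> \<subseteq> x_minus_prods S"
  shows "\<exists>es. set es \<subseteq> S \<and> length es \<le> (\<Sum>P\<in>\<Omega>. degree P) \<and> x_minus_prod es \<in> ideal_of \<sigma> \<delta> \<Omega>"
  using assms(2,3)
proof (induction \<Omega> rule: finite_induct)
  case empty
  then show ?case by (intro exI[of _ "[]"]) (simp add: ideal_of_def)
next
  case (insert P \<Omega>)
  obtain es where es: "set es \<subseteq> S" "length es \<le> (\<Sum>P\<in>\<Omega>. degree P)" "x_minus_prod es \<in> ideal_of \<sigma> \<delta> \<Omega>"
    using insert by auto
  obtain cs where cs: "set cs \<subseteq> S" "P = x_minus_prod cs"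
    using insert.prems by (auto simp: x_minus_prods_def)
  obtain ts K where ts: "set ts \<subseteq> S" "length ts \<le> length cs"
    "x_minus_prod ts \<odot> x_minus_prod es = K \<odot> x_minus_prod cs"
    using x_minus_prod_common_left_multiple[OF S es(1) cs(1)] by blast
  have "x_minus_prod (ts @ es) \<in> ideal_of \<sigma> \<delta> \<Omega>"
    using ideal_of_left_mult[OF es(3)] by (simp add: x_minus_prod_append)
  moreover have "right_dvd \<sigma> \<delta> P (x_minus_prod (ts @ es))"
    using ts(3) cs(2) by (auto simp: right_dvd_def x_minus_prod_append)
  ultimately have "x_minus_prod (ts @ es) \<in> ideal_of \<sigma> \<delta> (insert P \<Omega>)"
    by (simp add: ideal_of_def)
  moreover have "length (ts @ es) \<le> (\<Sum>P\<in>insert P \<Omega>. degree P)"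
    using insert.hyps ts(2) es(2) cs(2) by simp
  ultimately show ?case using ts(1) es(1) by (intro exI[of _ "ts @ es"]) simp
qed

lemma P_independent_ideal_of_eq:
  assumes S: "conj_closed \<sigma> \<delta> S" and ind: "P_independent \<sigma> \<delta> \<Omega>" and "\<Omega> \<subseteq> x_minus_prods S"
  shows "\<exists>es. set es \<subseteq> S \<and> length es = (\<Sum>P\<in>\<Omega>. degree P) \<and>
    ideal_of \<sigma> \<delta> \<Omega> = range (\<lambda>Q. Q \<odot> x_minus_prod es)"
proof -
  obtain es where es: "set es \<subseteq> S" "length es \<le> (\<Sum>P\<in>\<Omega>. degree P)" "x_minus_prod es \<in> ideal_of \<sigma> \<delta> \<Omega>"
    using ideal_of_contains_x_minus_prod[OF S _ assms(3)] ind by (auto simp: P_independent_def)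
  have len: "length es = (\<Sum>P\<in>\<Omega>. degree P)"
    using es(2) P_independent_degree_le[OF ind es(3)] by simp
  have "F \<in> range (\<lambda>Q. Q \<odot> x_minus_prod es)" if F: "F \<in> ideal_of \<sigma> \<delta> \<Omega>" for F
  proof -
    obtain Q R where QR: "F = Q \<odot> x_minus_prod es + R" "R = 0 \<or> degree R < length es"
      using skew_div_monic[of "x_minus_prod es" F] monic_x_minus_prod[of es] by auto
    have "R \<in> ideal_of \<sigma> \<delta> \<Omega>"
      using ideal_of_diff[OF F ideal_of_left_mult[OF es(3), of Q]] QR(1) by simp
    then have "R = 0"
      using QR(2) P_independent_degree_le[OF ind] len by force
    with QR(1) show ?thesis by simp
  qed
  with es(1,3) len show ?thesis by (blast intro: ideal_of_left_mult)
qed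

lemma P_independent_Un:
  assumes A: "conj_closed \<sigma> \<delta> A" and B: "conj_closed \<sigma> \<delta> B" and AB: "A \<inter> B = {}"
    and ind: "P_independent \<sigma> \<delta> \<Omega>" "P_independent \<sigma> \<delta> \<Psi>"
    and sub: "\<Omega> \<subseteq> x_minus_prods A" "\<Psi> \<subseteq> x_minus_prods B"
  shows "P_independent \<sigma> \<delta> (\<Omega> \<union> \<Psi>)"
proof -
  obtain es where es: "set es \<subseteq> A" "length es = (\<Sum>P\<in>\<Omega>. degree P)"
      "ideal_of \<sigma> \<delta> \<Omega> = range (\<lambda>Q. Q \<odot> x_minus_prod es)"
    using P_independent_ideal_of_eq[OF A ind(1) sub(1)] by blast
  obtain fs where fs: "set fs \<subseteq> B" "length fs = (\<Sum>P\<in>\<Psi>. degree P)"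
      "ideal_of \<sigma> \<delta> \<Psi> = range (\<lambda>Q. Q \<odot> x_minus_prod fs)"
    using P_independent_ideal_of_eq[OF B ind(2) sub(2)] by blast
  have fin: "finite \<Omega>" "finite \<Psi>" using ind by (simp_all add: P_independent_def)
  have "\<forall>P\<in>\<Omega> \<inter> \<Psi>. degree P = 0"
    using x_minus_prods_inter[OF B AB] sub by fastforce
  then have deg: "(\<Sum>P\<in>\<Omega> \<union> \<Psi>. degree P) = length es + length fs"
    using sum.union_inter[OF fin, of degree] es(2) fs(2) by simp
  obtain ts K where ts: "length ts \<le> length fs" "x_minus_prod ts \<odot> x_minus_prod es = K \<odot> x_minus_prod fs"
    using x_minus_prod_common_left_multiple[OF conj_closed_Un[OF A B], of es fs] es(1) fs(1) by auto
  show ?thesis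
  proof (rule P_independentI)
    have "x_minus_prod (ts @ es) \<in> range (\<lambda>Q. Q \<odot> x_minus_prod es)"
      by (simp add: x_minus_prod_append)
    moreover have "x_minus_prod (ts @ es) \<in> range (\<lambda>Q. Q \<odot> x_minus_prod fs)"
      using ts(2) by (simp add: x_minus_prod_append)
    ultimately show "x_minus_prod (ts @ es) \<in> ideal_of \<sigma> \<delta> (\<Omega> \<union> \<Psi>)"
      by (simp add: ideal_of_Un es(3) fs(3))
    show "degree (x_minus_prod (ts @ es)) \<le> (\<Sum>P\<in>\<Omega> \<union> \<Psi>. degree P)"
      using ts(1) deg by simp
  next
    fix G assume "G \<in> ideal_of \<sigma> \<delta> (\<Omega> \<union> \<Psi>)" "G \<noteq> 0"
    then show "(\<Sum>P\<in>\<Omega> \<union> \<Psi>. degree P) \<le> degree G"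
      unfolding deg ideal_of_Un es(3) fs(3)
      using degree_common_left_multiple_ge[OF A B AB es(1) fs(1)] by blast
  qed (use fin in simp_all)
qed

end

theorem mainTheorem7:
  fixes \<sigma> \<delta> :: "'a::division_ring \<Rightarrow> 'a"
    and a b :: "nat \<Rightarrow> 'a" and r s :: "nat \<Rightarrow> nat" and n m :: nat
  assumes "ring_endo \<sigma>" and "sigma_derivation \<sigma> \<delta>"
    and "n \<ge> 1" and "m \<ge> 1"
    and "\<forall>i\<in>{1..n}. r i \<ge> 1" and "\<forall>j\<in>{1..m}. s j \<ge> 1"
    and "card ((\<lambda>i. skew_pow \<sigma> \<delta> [:- a i, 1:] (r i)) ` {1..n}) = n"
    and "card ((\<lambda>j. skew_pow \<sigma> \<delta> [:- b j, 1:] (s j)) ` {1..m}) = m"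
    and "P_independent \<sigma> \<delta> ((\<lambda>i. skew_pow \<sigma> \<delta> [:- a i, 1:] (r i)) ` {1..n})"
    and "P_independent \<sigma> \<delta> ((\<lambda>j. skew_pow \<sigma> \<delta> [:- b j, 1:] (s j)) ` {1..m})"
    and "\<forall>i\<in>{1..n}. \<forall>j\<in>{1..m}. \<not> sd_conjugate \<sigma> \<delta> (a i) (b j)"
  shows "card ((\<lambda>i. skew_pow \<sigma> \<delta> [:- a i, 1:] (r i)) ` {1..n}
              \<union> (\<lambda>j. skew_pow \<sigma> \<delta> [:- b j, 1:] (s j)) ` {1..m}) = n + m
     \<and> P_independent \<sigma> \<delta> ((\<lambda>i. skew_pow \<sigma> \<delta> [:- a i, 1:] (r i)) ` {1..n}
              \<union> (\<lambda>j. skew_pow \<sigma> \<delta> [:- b j, 1:] (s j)) ` {1..m})"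
proof -
  interpret skew_poly_ring \<sigma> \<delta>
    using assms(1,2) by unfold_locales
  let ?\<Omega> = "(\<lambda>i. skew_pow \<sigma> \<delta> [:- a i, 1:] (r i)) ` {1..n}"
  let ?\<Psi> = "(\<lambda>j. skew_pow \<sigma> \<delta> [:- b j, 1:] (s j)) ` {1..m}"
  define A where "A = conj_hull \<sigma> \<delta> (a ` {1..n})"
  define B where "B = conj_hull \<sigma> \<delta> (b ` {1..m})"
  have closed: "conj_closed \<sigma> \<delta> A" "conj_closed \<sigma> \<delta> B"
    by (simp_all add: A_def B_def conj_closed_conj_hull)
  have AB: "A \<inter> B = {}"
    unfolding A_def B_def using assms(11) by (intro conj_hull_disjoint) blast
  have sub: "?\<Omega> \<subseteq> x_minus_prods A" "?\<Psi> \<subseteq> x_minus_prods B"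
    using subset_conj_hull[of "a ` {1..n}"] subset_conj_hull[of "b ` {1..m}"]
    by (fastforce simp: A_def B_def x_minus_prods_def skew_pow_x_minus)+
  have "?\<Omega> \<inter> ?\<Psi> = {}"
  proof (rule equals0I)
    fix P assume P: "P \<in> ?\<Omega> \<inter> ?\<Psi>"
    then have "P = [:1:]"
      using sub by (intro x_minus_prods_inter[OF closed(2) AB]) auto
    moreover obtain i where i: "i \<in> {1..n}" "P = x_minus_prod (replicate (r i) (a i))"
      using P by (auto simp: skew_pow_x_minus)
    ultimately have "r i = 0"
      using degree_x_minus_prod[of "replicate (r i) (a i)"] by simp
    with assms(5) i(1) show False by fastforce
  qed
  then have "card (?\<Omega> \<union> ?\<Psi>) = n + m"
    using card_Un_disjoint[of ?\<Omega> ?\<Psi>] assms(7,8) by simp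
  with P_independent_Un[OF closed AB assms(9,10) sub] show ?thesis by blast
qed

end
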